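(* Let $\lambda\ge\lambda_0$ be such that every state of $\mathcal{E}^o\cup\mathcal{E}^a$ is transient for $\{\varphi^\lambda_t\}_{t\ge0}$, and let $f_\lambda(x)=\big(\bm{\alpha}(\lambda I-T)^{-1}\bm{s}\big)^{-1}\bm{\alpha}e^{(T-\lambda I)x}\bm{s}$, $x\ge0$, be the exponentially tilted density. Suppose $\varphi^\lambda_0$ has initial distribution $(\widehat{\bm{\alpha}}^+,\widehat{\bm{\alpha}}^-)$, i.e. $\mathbb{P}(\varphi^\lambda_0=i^o)=\widehat{\alpha}^+_i$ and $\mathbb{P}(\varphi^\lambda_0=i^a)=\widehat{\alpha}^-_i$. Then the signed measure $B\mapsto \mathbb{E}[\mathbb{1}\{\tau\in B\}\beta(\varphi^\lambda_\tau)]$ on Borel sets $B\subseteq[0,\infty)$ is absolutely continuous and, for all $x\ge0$, $$f_\lambda(x)=\frac{w^++w^-}{\bm{\alpha}(\lambda I-T)^{-1}\bm{s}}\cdot\frac{\mathbb{E}[\mathbb{1}\{\tau\in \mathrm{d}x\}\beta(\varphi^\lambda_\tau)]}{\mathrm{d}x}=\frac{w^++w^-}{\bm{\alpha}(\lambda I-T)^{-1}\bm{s}}\,(\widehat{\bm{\alpha}}^+,\widehat{\bm{\alpha}}^-)\exp\!\left(\begin{bmatrix}T^+-\lambda I & T^-\\ T^- & T^+-\lambda I\end{bmatrix}x\right)\begin{bmatrix}\bm{s}\\-\bm{s}\end{bmatrix},$$ where the middle expression denotes the Lebesgue density of that signed measure at $x$.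
   Context: Let $p\ge1$, $\bm{\alpha}=(\alpha_1,\dots,\alpha_p)$ a real row vector, $T=(t_{ij})$ a real $p\times p$ matrix and $\bm{s}=(s_1,\dots,s_p)^\intercal$ a real column vector such that $f(x)=\bm{\alpha}e^{Tx}\bm{s}$, $x\ge0$, is a probability density on $(0,\infty)$ (a matrix-exponential distribution) and the eigenvalue of $T$ with largest real part is real and strictly negative. Then for $\lambda\ge0$, $\bm{\alpha}(\lambda I-T)^{-1}\bm{s}=\int_0^\infty e^{-\lambda r}f(r)\,\mathrm{d}r>0$. Define $p\times p$ matrices $T^+=(t^+_{ij})$, $T^-=(t^-_{ij})$ by $t^+_{ij}=\max\{0,t_{ij}\}$, $t^-_{ij}=\max\{0,-t_{ij}\}$ for $i\neq j$, and $t^+_{ii}=t_{ii}$, $t^-_{ii}=0$ (so $T=T^+-T^-$). Define column vectors $\bm{s}^\pm$ by $s^\pm_i=\max\{0,\pm s_i\}$. Let $\lambda_0=\min\{r\ge0:\ t_{ii}+\sum_{j\neq i}|t_{ij}|+|s_i|\le r\text{ for all }i\}$. Let $w^\pm=\sum_{i=1}^p\max\{0,\pm\alpha_i\}$, let $\alpha^\pm_i=\max\{0,\pm\alpha_i\}/w^\pm$ if $w^\pm>0$ and $\alpha^\pm_i=0$ if $w^\pm=0$, $\bm{\alpha}^\pm=(\alpha^\pm_1,\dots,\alpha^\pm_p)$ (so $\bm{\alpha}=w^+\bm{\alpha}^+-w^-\bm{\alpha}^-$), and $\widehat{\bm{\alpha}}^\pm=\frac{w^\pm}{w^++w^-}\bm{\alpha}^\pm$.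 For $\lambda\ge\lambda_0$, let $\{\varphi^\lambda_t\}_{t\ge0}$ be a continuous-time Markov jump process on $\mathcal{E}=\mathcal{E}^o\cup\mathcal{E}^a\cup\{\Delta^o\}\cup\{\Delta^a\}$, $\mathcal{E}^o=\{1^o,\dots,p^o\}$, $\mathcal{E}^a=\{1^a,\dots,p^a\}$, with subintensity matrix (states ordered $\mathcal{E}^o,\mathcal{E}^a,\Delta^o,\Delta^a$) $$G=\begin{bmatrix}T^+-\lambda I & T^- & \bm{s}^+ & \bm{s}^-\\ T^- & T^+-\lambda I & \bm{s}^- & \bm{s}^+\\ \bm{0}&\bm{0}&0&0\\ \bm{0}&\bm{0}&0&0\end{bmatrix}.$$ Thus $\Delta^o,\Delta^a$ are absorbing, and from a state in $\mathcal{E}^o\cup\mathcal{E}^a$ the process is killed at rate equal to minus the corresponding row sum of $G$, being sent to a cemetery state $\dagger$. Let $\tau=\inf\{x\ge0:\varphi^\lambda_x\notin\mathcal{E}^o\cup\mathcal{E}^a\}$, and $\beta(\Delta^o)=1$, $\beta(\Delta^a)=-1$, $\beta(\dagger)=0$. *)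

theory Defs
  imports "HOL-Probability.Probability"
begin

text \<open>A p x p matrix is a function nat => nat => real, only entries with indices < p
  matter; vectors are functions nat => real.\<close>

type_synonym rmat = "nat \<Rightarrow> nat \<Rightarrow> real"

definition mid :: rmat where "mid = (\<lambda>i j. if i = j then 1 else 0)"

definition mmul :: "nat \<Rightarrow> rmat \<Rightarrow> rmat \<Rightarrow> rmat" where
  "mmul n A B = (\<lambda>i j. \<Sum>k<n. A i k * B k j)"

definition mscale :: "real \<Rightarrow> rmat \<Rightarrow> rmat" where
  "mscale c A = (\<lambda>i j. c * A i j)"

fun mpow :: "nat \<Rightarrow> rmat \<Rightarrow> nat \<Rightarrow> rmat" where
  "mpow n A 0 = mid"
| "mpow n A (Suc k) = mmul n (mpow n A k) A"

definition mexp :: "nat \<Rightarrow> rmat \<Rightarrow> rmat" where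
  "mexp n A = (\<lambda>i j. \<Sum>k. mpow n A k i j / fact k)"

text \<open>Inverse of an n x n matrix (meaningful when it is invertible).\<close>
definition minv :: "nat \<Rightarrow> rmat \<Rightarrow> rmat" where
  "minv n A = (SOME B. \<forall>i<n. \<forall>j<n. mmul n A B i j = mid i j \<and> mmul n B A i j = mid i j)"

definition cdet :: "nat \<Rightarrow> (nat \<Rightarrow> nat \<Rightarrow> complex) \<Rightarrow> complex" where
  "cdet n A = (\<Sum>\<pi> | \<pi> permutes {..<n}. of_int (sign \<pi>) * (\<Prod>i<n. A i (\<pi> i)))"

definition is_eigenvalue :: "nat \<Rightarrow> rmat \<Rightarrow> complex \<Rightarrow> bool" where
  "is_eigenvalue n T z \<longleftrightarrow>
     cdet n (\<lambda>i j. (if i = j then z else 0) - complex_of_real (T i j)) = 0"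

definition bilin :: "nat \<Rightarrow> (nat \<Rightarrow> real) \<Rightarrow> rmat \<Rightarrow> (nat \<Rightarrow> real) \<Rightarrow> real" where
  "bilin n a A v = (\<Sum>i<n. \<Sum>j<n. a i * A i j * v j)"

definition ME_density :: "nat \<Rightarrow> (nat \<Rightarrow> real) \<Rightarrow> rmat \<Rightarrow> (nat \<Rightarrow> real) \<Rightarrow> real \<Rightarrow> real" where
  "ME_density p \<alpha> T s x = bilin p \<alpha> (mexp p (mscale x T)) s"

definition Tplus :: "rmat \<Rightarrow> rmat" where
  "Tplus T = (\<lambda>i j. if i = j then T i i else max 0 (T i j))"

definition Tminus :: "rmat \<Rightarrow> rmat" where
  "Tminus T = (\<lambda>i j. if i = j then 0 else max 0 (- T i j))"

definition splus :: "(nat \<Rightarrow> real) \<Rightarrow> nat \<Rightarrow> real" where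
  "splus s = (\<lambda>i. max 0 (s i))"

definition sminus :: "(nat \<Rightarrow> real) \<Rightarrow> nat \<Rightarrow> real" where
  "sminus s = (\<lambda>i. max 0 (- s i))"

definition lambda0 :: "nat \<Rightarrow> rmat \<Rightarrow> (nat \<Rightarrow> real) \<Rightarrow> real" where
  "lambda0 p T s = Inf {r. r \<ge> 0 \<and>
      (\<forall>i<p. T i i + (\<Sum>j\<in>{..<p} - {i}. \<bar>T i j\<bar>) + \<bar>s i\<bar> \<le> r)}"

definition wplus :: "nat \<Rightarrow> (nat \<Rightarrow> real) \<Rightarrow> real" where
  "wplus p \<alpha> = (\<Sum>i<p. max 0 (\<alpha> i))"

definition wminus :: "nat \<Rightarrow> (nat \<Rightarrow> real) \<Rightarrow> real" where
  "wminus p \<alpha> = (\<Sum>i<p. max 0 (- \<alpha> i))"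

definition alpha_plus :: "nat \<Rightarrow> (nat \<Rightarrow> real) \<Rightarrow> nat \<Rightarrow> real" where
  "alpha_plus p \<alpha> = (\<lambda>i. if wplus p \<alpha> > 0 then max 0 (\<alpha> i) / wplus p \<alpha> else 0)"

definition alpha_minus :: "nat \<Rightarrow> (nat \<Rightarrow> real) \<Rightarrow> nat \<Rightarrow> real" where
  "alpha_minus p \<alpha> = (\<lambda>i. if wminus p \<alpha> > 0 then max 0 (- \<alpha> i) / wminus p \<alpha> else 0)"

definition alpha_hat_plus :: "nat \<Rightarrow> (nat \<Rightarrow> real) \<Rightarrow> nat \<Rightarrow> real" where
  "alpha_hat_plus p \<alpha> = (\<lambda>i. wplus p \<alpha> / (wplus p \<alpha> + wminus p \<alpha>) * alpha_plus p \<alpha> i)"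

definition alpha_hat_minus :: "nat \<Rightarrow> (nat \<Rightarrow> real) \<Rightarrow> nat \<Rightarrow> real" where
  "alpha_hat_minus p \<alpha> = (\<lambda>i. wminus p \<alpha> / (wplus p \<alpha> + wminus p \<alpha>) * alpha_minus p \<alpha> i)"

text \<open>State coding: i^o = i (i<p), i^a = p+i (i<p), Delta^o = 2p, Delta^a = 2p+1,
  cemetery = 2p+2.  Total number of states 2p+3.\<close>

definition subG :: "nat \<Rightarrow> rmat \<Rightarrow> (nat \<Rightarrow> real) \<Rightarrow> real \<Rightarrow> rmat" where
  "subG p T s lam = (\<lambda>i j.
     if i < p then
       (if j < p then Tplus T i j - (if i = j then lam else 0)
        else if j < 2*p then Tminus T i (j - p)
        else if j = 2*p then splus s i
        else if j = 2*p+1 then sminus s i else 0)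
     else if i < 2*p then
       (if j < p then Tminus T (i - p) j
        else if j < 2*p then Tplus T (i - p) (j - p) - (if i - p = j - p then lam else 0)
        else if j = 2*p then sminus s (i - p)
        else if j = 2*p+1 then splus s (i - p) else 0)
     else 0)"

definition genQ :: "nat \<Rightarrow> rmat \<Rightarrow> (nat \<Rightarrow> real) \<Rightarrow> real \<Rightarrow> rmat" where
  "genQ p T s lam = (\<lambda>i j.
     if i < 2*p then
       (if j < 2*p+2 then subG p T s lam i j
        else if j = 2*p+2 then - (\<Sum>k<2*p+2. subG p T s lam i k) else 0)
     else 0)"

text \<open>The 2p x 2p block [[T^+ - lambda I, T^-],[T^-, T^+ - lambda I]].\<close>
definition blockG :: "nat \<Rightarrow> rmat \<Rightarrow> (nat \<Rightarrow> real) \<Rightarrow> real \<Rightarrow> rmat" where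
  "blockG p T s lam = (\<lambda>i j. if i < 2*p \<and> j < 2*p then subG p T s lam i j else 0)"

definition init_dist :: "nat \<Rightarrow> (nat \<Rightarrow> real) \<Rightarrow> nat \<Rightarrow> real" where
  "init_dist p \<alpha> = (\<lambda>i. if i < p then alpha_hat_plus p \<alpha> i
                         else if i < 2*p then alpha_hat_minus p \<alpha> (i - p) else 0)"

definition s_pm :: "nat \<Rightarrow> (nat \<Rightarrow> real) \<Rightarrow> nat \<Rightarrow> real" where
  "s_pm p s = (\<lambda>i. if i < p then s i else if i < 2*p then - s (i - p) else 0)"

definition is_MJP :: "'w measure \<Rightarrow> nat \<Rightarrow> rmat \<Rightarrow> (nat \<Rightarrow> real) \<Rightarrow> ('w \<Rightarrow> real \<Rightarrow> nat) \<Rightarrow> bool" where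
  "is_MJP M n Q \<pi> \<phi> \<longleftrightarrow>
     (\<forall>t. (\<lambda>\<omega>. \<phi> \<omega> t) \<in> measurable M (count_space UNIV)) \<and>
     (\<forall>\<omega>\<in>space M. \<forall>t\<ge>0. \<phi> \<omega> t < n) \<and>
     (\<forall>\<omega>\<in>space M. \<forall>t\<ge>0. \<exists>\<epsilon>>0. \<forall>u. t \<le> u \<and> u < t + \<epsilon> \<longrightarrow> \<phi> \<omega> u = \<phi> \<omega> t) \<and>
     (\<forall>m (ts :: nat \<Rightarrow> real) (st :: nat \<Rightarrow> nat).
        ts 0 = 0 \<and> (\<forall>k<m. ts k \<le> ts (Suc k)) \<longrightarrow>
        measure M {\<omega>\<in>space M. \<forall>k\<le>m. \<phi> \<omega> (ts k) = st k} =
          \<pi> (st 0) * (\<Prod>k<m. mexp n (mscale (ts (Suc k) - ts k) Q) (st k) (st (Suc k))))"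

text \<open>Transience of state i for the chain with generator Q (n states): finite expected
  occupation time of i when started in i, i.e. the integral of p_ii(t) over [0,oo)
  is finite.\<close>
definition transient_state :: "nat \<Rightarrow> rmat \<Rightarrow> nat \<Rightarrow> bool" where
  "transient_state n Q i \<longleftrightarrow>
     set_integrable lborel {0..} (\<lambda>t. mexp n (mscale t Q) i i)"

definition exits :: "nat \<Rightarrow> ('w \<Rightarrow> real \<Rightarrow> nat) \<Rightarrow> 'w \<Rightarrow> bool" where
  "exits p \<phi> \<omega> \<longleftrightarrow> (\<exists>x\<ge>0. \<phi> \<omega> x \<ge> 2*p)"

definition tau :: "nat \<Rightarrow> ('w \<Rightarrow> real \<Rightarrow> nat) \<Rightarrow> 'w \<Rightarrow> real" where
  "tau p \<phi> \<omega> = Inf {x. 0 \<le> x \<and> \<phi> \<omega> x \<ge> 2*p}"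

definition beta :: "nat \<Rightarrow> nat \<Rightarrow> real" where
  "beta p k = (if k = 2*p then 1 else if k = 2*p+1 then -1 else 0)"

text \<open>The signed measure B \<mapsto> E[1{tau \<in> B} beta(phi_tau)] (tau = \<infinity> contributes 0).\<close>
definition tau_measure :: "'w measure \<Rightarrow> nat \<Rightarrow> ('w \<Rightarrow> real \<Rightarrow> nat) \<Rightarrow> real set \<Rightarrow> real" where
  "tau_measure M p \<phi> B =
     (\<integral>\<omega>. (if exits p \<phi> \<omega> \<and> tau p \<phi> \<omega> \<in> B then beta p (\<phi> \<omega> (tau p \<phi> \<omega>)) else 0) \<partial>M)"

end

theory Submission
  imports Defs
begin

text \<open>
  The block matrix G acts on vectors (u, -u) as T - lam I acts on u, and the weighted initial
  law (w^+ + w^-)(alpha_hat^+, alpha_hat^-) recombines to alpha; this gives the matrix identity.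
  Since Delta^o and Delta^a are absorbing, almost surely the process has exited into Delta by
  time x exactly when it sits in Delta at time x. So the exit time, restricted to exits into
  Delta, has distribution function P(phi_x = Delta), whose derivative is the Delta-entry of
  pi e^(Q x) Q; the columns of Q leading to Delta^o and Delta^a differ by (s, -s).
\<close>

section \<open>Matrix exponentials\<close>

definition mvec :: "nat \<Rightarrow> rmat \<Rightarrow> (nat \<Rightarrow> real) \<Rightarrow> nat \<Rightarrow> real" where
  "mvec n A u = (\<lambda>i. \<Sum>j<n. A i j * u j)"

lemma mpow_mscale: "mpow n (mscale t A) m = mscale (t ^ m) (mpow n A m)"
proof (induction m)
  case 0 then show ?case by (auto simp: mscale_def mid_def fun_eq_iff)
next
  case (Suc m) then show ?case
    by (auto simp: mscale_def mmul_def sum_distrib_left algebra_simps fun_eq_iff intro!: sum.cong)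
qed

lemma abs_mpow_le:
  assumes A: "\<And>k j. k < n \<Longrightarrow> j < n \<Longrightarrow> \<bar>A k j\<bar> \<le> a" and "j < n"
  shows "\<bar>mpow n A m i j\<bar> \<le> (real n * a) ^ m"
  using assms(2)
proof (induction m arbitrary: j)
  case 0 then show ?case by (auto simp: mid_def)
next
  case (Suc m)
  have a0: "0 \<le> a" using A[of j j] Suc.prems by auto
  have "\<bar>mpow n A (Suc m) i j\<bar> \<le> (\<Sum>k<n. \<bar>mpow n A m i k\<bar> * \<bar>A k j\<bar>)"
    unfolding mpow.simps mmul_def by (rule order_trans[OF sum_abs]) (simp add: abs_mult)
  also have "\<dots> \<le> (\<Sum>k<n. (real n * a) ^ m * a)"
    by (intro sum_mono mult_mono Suc.IH A Suc.prems) (auto simp: a0)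
  finally show ?case by (simp add: mult_ac)
qed

lemma summable_mpow_fact:
  assumes "j < n" shows "summable (\<lambda>m. mpow n A m i j / fact m)"
proof -
  define a where "a = (\<Sum>k<n. \<Sum>l<n. \<bar>A k l\<bar>)"
  have A: "\<bar>A k l\<bar> \<le> a" if "k < n" "l < n" for k l
  proof -
    have "\<bar>A k l\<bar> \<le> (\<Sum>l<n. \<bar>A k l\<bar>)" using that by (intro member_le_sum) auto
    also have "\<dots> \<le> a" unfolding a_def using that
      by (intro member_le_sum[where f = "\<lambda>k. \<Sum>l<n. \<bar>A k l\<bar>"]) auto
    finally show ?thesis .
  qed
  show ?thesis
  proof (rule summable_comparison_test')
    show "summable (\<lambda>m. inverse (fact m) * (real n * a) ^ m)" by (rule summable_exp)
    show "norm (mpow n A m i j / fact m) \<le> inverse (fact m) * (real n * a) ^ m" for m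
      using abs_mpow_le[OF A \<open>j < n\<close>, where m = m and i = i]
      by (simp add: divide_inverse abs_mult mult.commute mult_left_mono)
  qed
qed

lemma mexp_mscale_powser: "mexp n (mscale t A) i j = (\<Sum>m. mpow n A m i j / fact m * t ^ m)"
  unfolding mexp_def mpow_mscale by (simp add: mscale_def algebra_simps)

lemma summable_mpow_powser: "j < n \<Longrightarrow> summable (\<lambda>m. mpow n A m i j / fact m * t ^ m)"
  using summable_mpow_fact[of j n "mscale t A" i] unfolding mpow_mscale
  by (simp add: mscale_def mult.commute)

lemma mexp_mscale_0: "mexp n (mscale 0 A) i k = mid i k"
  unfolding mexp_mscale_powser using powser_zero[of "\<lambda>m. mpow n A m i k / fact m"] by simp

lemma has_real_derivative_mexp:
  assumes "k < n"
  shows "((\<lambda>t. mexp n (mscale t A) i k) has_real_derivative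
           (\<Sum>j<n. mexp n (mscale t A) i j * A j k)) (at t)"
proof -
  define c where "c m = mpow n A m i k / fact m" for m
  have "summable (\<lambda>m. c m * (\<bar>t\<bar> + 1) ^ m)"
    using summable_mpow_powser[OF assms] by (simp add: c_def)
  then have D: "((\<lambda>x. \<Sum>m. c m * x ^ m) has_real_derivative (\<Sum>m. diffs c m * t ^ m)) (at t)"
    by (rule termdiffs_strong) simp
  have "diffs c m = mpow n A (Suc m) i k / fact m" for m
    by (simp add: diffs_def c_def fact_Suc del: mpow.simps)
  then have "diffs c m * t ^ m = (\<Sum>j<n. mpow n A m i j / fact m * t ^ m * A j k)" for m
    by (simp add: mmul_def sum_divide_distrib sum_distrib_right sum_distrib_left algebra_simps)
  then have "(\<Sum>m. diffs c m * t ^ m) = (\<Sum>m. \<Sum>j<n. mpow n A m i j / fact m * t ^ m * A j k)"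
    by simp
  also have "\<dots> = (\<Sum>j<n. \<Sum>m. mpow n A m i j / fact m * t ^ m * A j k)"
    by (rule suminf_sum, rule summable_mult2, rule summable_mpow_powser) simp
  also have "\<dots> = (\<Sum>j<n. mexp n (mscale t A) i j * A j k)"
    unfolding mexp_mscale_powser by (intro sum.cong refl suminf_mult2[symmetric] summable_mpow_powser) simp
  finally show ?thesis using D by (simp add: mexp_mscale_powser[abs_def] c_def)
qed

lemma mpow_zero_row:
  assumes "\<And>j. A a j = 0"
  shows "mpow n A m a b = (if m = 0 then mid a b else 0)"
proof (induction m arbitrary: b)
  case (Suc m)
  have "mpow n A m a l * A l b = 0" for l
    using Suc.IH[of l] assms by (auto simp: mid_def)
  then have "(\<Sum>l<n. mpow n A m a l * A l b) = 0" by (intro sum.neutral) blast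
  then show ?case by (simp add: mmul_def)
qed simp

lemma mexp_zero_row:
  assumes "\<And>j. A a j = 0"
  shows "mexp n (mscale h A) a b = mid a b"
proof -
  have "(\<lambda>m. mpow n (mscale h A) m a b / fact m) = (\<lambda>m. if m = 0 then mid a b else 0)"
    by (subst mpow_zero_row[where a = a]) (auto simp: assms mscale_def)
  then show ?thesis
    using sums_single[of 0 "\<lambda>_. mid a b"] by (simp add: mexp_def sums_iff)
qed

lemma mpow_restrict:
  assumes "r \<le> n" and zero: "\<And>l j. r \<le> l \<Longrightarrow> l < n \<Longrightarrow> j < r \<Longrightarrow> A l j = 0"
    and eq: "\<And>l j. l < r \<Longrightarrow> j < r \<Longrightarrow> B l j = A l j"
    and "i < r" "j < r"
  shows "mpow n A m i j = mpow r B m i j"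
  using \<open>j < r\<close>
proof (induction m arbitrary: j)
  case (Suc m)
  have "(\<Sum>l<n. mpow n A m i l * A l j) = (\<Sum>l<r. mpow n A m i l * A l j)"
    using \<open>r \<le> n\<close> zero Suc.prems by (intro sum.mono_neutral_right) auto
  also have "\<dots> = (\<Sum>l<r. mpow r B m i l * B l j)"
    using Suc.IH eq Suc.prems by (intro sum.cong) auto
  finally show ?case by (simp add: mmul_def)
qed simp

lemma mexp_restrict:
  assumes "r \<le> n" and "\<And>l j. r \<le> l \<Longrightarrow> l < n \<Longrightarrow> j < r \<Longrightarrow> A l j = 0"
    and "\<And>l j. l < r \<Longrightarrow> j < r \<Longrightarrow> B l j = A l j"
    and "i < r" "j < r"
  shows "mexp n (mscale t A) i j = mexp r (mscale t B) i j"
  unfolding mexp_def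
  by (subst mpow_restrict[OF assms(1) _ _ assms(4,5), where B = "mscale t B"])
     (auto simp: mscale_def assms(2,3))

lemma mvec_mpow_Suc: "mvec n (mpow n A (Suc m)) u = mvec n (mpow n A m) (mvec n A u)"
proof
  fix i
  have "(\<Sum>j<n. (\<Sum>l<n. mpow n A m i l * A l j) * u j) = (\<Sum>j<n. \<Sum>l<n. mpow n A m i l * A l j * u j)"
    by (simp add: sum_distrib_right)
  also have "\<dots> = (\<Sum>l<n. \<Sum>j<n. mpow n A m i l * A l j * u j)"
    by (rule sum.swap)
  also have "\<dots> = (\<Sum>l<n. mpow n A m i l * (\<Sum>j<n. A l j * u j))"
    by (simp add: sum_distrib_left mult.assoc)
  finally show "mvec n (mpow n A (Suc m)) u i = mvec n (mpow n A m) (mvec n A u) i"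
    by (simp add: mvec_def mmul_def)
qed

lemma mvec_mid: "mvec n mid u i = (if i < n then u i else 0)"
proof -
  have "(\<Sum>j<n. mid i j * u j) = (\<Sum>j<n. if i = j then u j else 0)"
    by (rule sum.cong) (auto simp: mid_def)
  then show ?thesis by (simp add: mvec_def)
qed

lemma mvec_mexp: "mvec n (mexp n A) u i = (\<Sum>m. mvec n (mpow n A m) u i / fact m)"
proof -
  have "mvec n (mexp n A) u i = (\<Sum>j<n. \<Sum>m. mpow n A m i j / fact m * u j)"
    unfolding mvec_def mexp_def
    by (rule sum.cong[OF refl], rule suminf_mult2, rule summable_mpow_fact) simp
  also have "\<dots> = (\<Sum>m. \<Sum>j<n. mpow n A m i j / fact m * u j)"
    by (intro suminf_sum[symmetric] summable_mult2 summable_mpow_fact) auto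
  also have "\<dots> = (\<Sum>m. mvec n (mpow n A m) u i / fact m)"
    by (simp add: mvec_def sum_divide_distrib algebra_simps)
  finally show ?thesis .
qed

lemma summable_mvec_mpow: "summable (\<lambda>m. mvec n (mpow n A m) u i / fact m)"
proof -
  have "summable (\<lambda>m. \<Sum>j<n. mpow n A m i j / fact m * u j)"
    by (intro summable_sum summable_mult2 summable_mpow_fact) auto
  then show ?thesis by (simp add: mvec_def sum_divide_distrib algebra_simps)
qed

lemma bilin_mvec: "bilin n a A v = (\<Sum>i<n. a i * mvec n A v i)"
  by (simp add: bilin_def mvec_def sum_distrib_left algebra_simps)

lemma bilin_restrict:
  assumes "r \<le> n" and "\<And>i. r \<le> i \<Longrightarrow> a i = 0" and "\<And>j. r \<le> j \<Longrightarrow> v j = 0"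
    and "\<And>i j. i < r \<Longrightarrow> j < r \<Longrightarrow> A i j = B i j"
  shows "bilin n a A v = bilin r a B v"
  unfolding bilin_def using assms
  by (intro sum.mono_neutral_cong_right) (auto intro!: sum.mono_neutral_cong_right)

section \<open>The doubled block matrix\<close>

lemma sum_lessThan_double:
  fixes p :: nat shows "(\<Sum>j<2 * p. f j) = (\<Sum>j<p. f j) + (\<Sum>j<p. f (j + p))"
proof -
  have "(\<Sum>j<2 * p. f j) = (\<Sum>j\<in>{..<p} \<union> {p..<2 * p}. f j)"
    by (intro sum.cong) auto
  also have "\<dots> = (\<Sum>j<p. f j) + (\<Sum>j\<in>{p..<2 * p}. f j)"
    by (rule sum.union_disjoint) auto
  also have "(\<Sum>j\<in>{p..<2 * p}. f j) = (\<Sum>j<p. f (j + p))"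
    using sum.atLeastLessThan_shift_bounds[of f 0 p p] by (simp add: mult_2 atLeast0LessThan add.commute)
  finally show ?thesis .
qed

lemma mvec_s_pm:
  assumes upper: "\<And>i j. i < p \<Longrightarrow> j < p \<Longrightarrow> G i j - G i (j + p) = C i j"
    and lower: "\<And>i j. i < p \<Longrightarrow> j < p \<Longrightarrow> G (i + p) (j + p) - G (i + p) j = C i j"
    and zero: "\<And>i j. 2 * p \<le> i \<Longrightarrow> G i j = 0"
  shows "mvec (2 * p) G (s_pm p u) = s_pm p (mvec p C u)"
proof
  fix i
  have split: "mvec (2 * p) G (s_pm p u) i = (\<Sum>j<p. (G i j - G i (j + p)) * u j)"
    unfolding mvec_def sum_lessThan_double left_diff_distrib sum_subtractf by (simp add: s_pm_def sum_negf)
  consider "i < p" | i' where "i = i' + p" "i' < p" | "2 * p \<le> i"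
    by (metis add.commute le_Suc_ex mult_2 nat_add_left_cancel_less not_less)
  then show "mvec (2 * p) G (s_pm p u) i = s_pm p (mvec p C u) i"
  proof cases
    case 1
    then show ?thesis unfolding split by (simp add: upper s_pm_def mvec_def)
  next
    case 2
    have "(\<Sum>j<p. (G i j - G i (j + p)) * u j) = - (\<Sum>j<p. C i' j * u j)"
      unfolding sum_negf[symmetric] using 2 lower[of i'] by (intro sum.cong) (auto simp: algebra_simps)
    then show ?thesis unfolding split using 2 by (simp add: s_pm_def mvec_def)
  next
    case 3
    then show ?thesis unfolding split by (simp add: zero s_pm_def)
  qed
qed

lemma mvec_mexp_s_pm:
  assumes "\<And>i j. i < p \<Longrightarrow> j < p \<Longrightarrow> G i j - G i (j + p) = C i j"
    and "\<And>i j. i < p \<Longrightarrow> j < p \<Longrightarrow> G (i + p) (j + p) - G (i + p) j = C i j"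
    and "\<And>i j. 2 * p \<le> i \<Longrightarrow> G i j = 0"
  shows "mvec (2 * p) (mexp (2 * p) G) (s_pm p u) = s_pm p (mvec p (mexp p C) u)"
proof
  fix i
  have pow: "mvec (2 * p) (mpow (2 * p) G m) (s_pm p v) = s_pm p (mvec p (mpow p C m) v)" for m v
  proof (induction m arbitrary: v)
    case 0
    show ?case by (auto simp: mvec_mid s_pm_def fun_eq_iff)
  next
    case (Suc m)
    show ?case by (simp only: mvec_mpow_Suc mvec_s_pm[where G = G and C = C, OF assms] Suc.IH)
  qed
  have "(\<Sum>m. s_pm p (mvec p (mpow p C m) u) i / fact m) = s_pm p (\<lambda>i. \<Sum>m. mvec p (mpow p C m) u i / fact m) i"
    using suminf_minus[OF summable_mvec_mpow, of p C u "i - p"]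
    by (auto simp: s_pm_def if_distrib cong: if_cong)
  then show "mvec (2 * p) (mexp (2 * p) G) (s_pm p u) i = s_pm p (mvec p (mexp p C) u) i"
    unfolding mvec_mexp pow by (simp add: mvec_mexp[abs_def])
qed

lemma mvec_mexp_blockG:
  "mvec (2 * p) (mexp (2 * p) (mscale x (blockG p T s lam))) (s_pm p u) =
     s_pm p (mvec p (mexp p (mscale x (\<lambda>i j. T i j - (if i = j then lam else 0)))) u)"
  by (rule mvec_mexp_s_pm) (auto simp: mscale_def blockG_def subG_def Tplus_def Tminus_def max_def algebra_simps)

lemma wplus_eq_0D:
  assumes "wplus p \<alpha> = 0" "i < p" shows "\<alpha> i \<le> 0"
proof -
  have "max 0 (\<alpha> i) = 0"
    using assms unfolding wplus_def by (subst (asm) sum_nonneg_eq_0_iff) auto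
  then show ?thesis by (auto simp: max_def split: if_splits)
qed

lemma wminus_eq_0D:
  assumes "wminus p \<alpha> = 0" "i < p" shows "0 \<le> \<alpha> i"
proof -
  have "max 0 (- \<alpha> i) = 0"
    using assms unfolding wminus_def by (subst (asm) sum_nonneg_eq_0_iff) auto
  then show ?thesis by (auto simp: max_def split: if_splits)
qed

lemma weight_mult_alpha_hat:
  assumes "wplus p \<alpha> + wminus p \<alpha> \<noteq> 0" "i < p"
  shows "(wplus p \<alpha> + wminus p \<alpha>) * alpha_hat_plus p \<alpha> i = max 0 (\<alpha> i)"
    and "(wplus p \<alpha> + wminus p \<alpha>) * alpha_hat_minus p \<alpha> i = max 0 (- \<alpha> i)"
proof -
  have "0 \<le> wplus p \<alpha>" "0 \<le> wminus p \<alpha>" by (simp_all add: wplus_def wminus_def sum_nonneg)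
  then show "(wplus p \<alpha> + wminus p \<alpha>) * alpha_hat_plus p \<alpha> i = max 0 (\<alpha> i)"
    and "(wplus p \<alpha> + wminus p \<alpha>) * alpha_hat_minus p \<alpha> i = max 0 (- \<alpha> i)"
    using assms wplus_eq_0D[of p \<alpha> i] wminus_eq_0D[of p \<alpha> i]
    by (auto simp: alpha_hat_plus_def alpha_plus_def alpha_hat_minus_def alpha_minus_def)
qed

lemma weighted_init_dist_s_pm:
  "(wplus p \<alpha> + wminus p \<alpha>) * (\<Sum>i<2 * p. init_dist p \<alpha> i * s_pm p v i) = (\<Sum>i<p. \<alpha> i * v i)"
proof (cases "wplus p \<alpha> + wminus p \<alpha> = 0")
  case True
  have "0 \<le> wplus p \<alpha>" "0 \<le> wminus p \<alpha>" by (simp_all add: wplus_def wminus_def sum_nonneg)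
  then have "\<alpha> i = 0" if "i < p" for i
    using True wplus_eq_0D[of p \<alpha> i] wminus_eq_0D[of p \<alpha> i] that by force
  then show ?thesis using True by simp
next
  case False
  have "(wplus p \<alpha> + wminus p \<alpha>) * (\<Sum>i<2 * p. init_dist p \<alpha> i * s_pm p v i)
      = (\<Sum>i<p. ((wplus p \<alpha> + wminus p \<alpha>) * alpha_hat_plus p \<alpha> i
                 - (wplus p \<alpha> + wminus p \<alpha>) * alpha_hat_minus p \<alpha> i) * v i)"
    unfolding sum_lessThan_double
    by (simp add: init_dist_def s_pm_def sum_distrib_left sum.distrib[symmetric] algebra_simps)
  also have "\<dots> = (\<Sum>i<p. \<alpha> i * v i)"
    using False weight_mult_alpha_hat[OF False] by (intro sum.cong refl) auto
  finally show ?thesis .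
qed

lemma bilin_init_dist_blockG:
  "(wplus p \<alpha> + wminus p \<alpha>) *
     bilin (2 * p) (init_dist p \<alpha>) (mexp (2 * p) (mscale x (blockG p T s lam))) (s_pm p s) =
   bilin p \<alpha> (mexp p (mscale x (\<lambda>i j. T i j - (if i = j then lam else 0)))) s"
  unfolding bilin_mvec mvec_mexp_blockG by (rule weighted_init_dist_s_pm)

section \<open>First hitting times of right-continuous paths\<close>

definition right_locally_const :: "(real \<Rightarrow> 'a) \<Rightarrow> bool" where
  "right_locally_const f \<longleftrightarrow> (\<forall>t\<ge>0. \<exists>\<epsilon>>0. \<forall>u. t \<le> u \<and> u < t + \<epsilon> \<longrightarrow> f u = f t)"

definition hit_time :: "'a::linorder \<Rightarrow> (real \<Rightarrow> 'a) \<Rightarrow> real" where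
  "hit_time c f = Inf {x. 0 \<le> x \<and> c \<le> f x}"

definition absorbed_on_Rats :: "'a::linorder \<Rightarrow> (real \<Rightarrow> 'a) \<Rightarrow> bool" where
  "absorbed_on_Rats c f \<longleftrightarrow> (\<forall>q\<in>\<rat>. \<forall>r\<in>\<rat>. 0 \<le> q \<longrightarrow> q \<le> r \<longrightarrow> c \<le> f q \<longrightarrow> f r = f q)"

context
  fixes f :: "real \<Rightarrow> 'a::linorder" and c :: 'a
  assumes rlc: "right_locally_const f"
begin

lemma right_locally_constE:
  assumes "0 \<le> t"
  obtains \<epsilon> where "\<epsilon> > 0" "\<And>u. t \<le> u \<Longrightarrow> u < t + \<epsilon> \<Longrightarrow> f u = f t"
  using rlc assms unfolding right_locally_const_def by blast

lemma right_locally_const_Rats: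
  assumes "0 \<le> t" "t < b"
  obtains q where "q \<in> \<rat>" "t < q" "q < b" "f q = f t"
proof -
  obtain \<epsilon> where "\<epsilon> > 0" and \<epsilon>: "\<And>u. t \<le> u \<Longrightarrow> u < t + \<epsilon> \<Longrightarrow> f u = f t"
    using right_locally_constE[OF assms(1)] by blast
  then obtain q where "q \<in> \<rat>" "t < q" "q < min b (t + \<epsilon>)"
    using Rats_dense_in_real[of t "min b (t + \<epsilon>)"] assms(2) by auto
  with \<epsilon>[of q] that show thesis by auto
qed

lemma hit_time_le: "0 \<le> x \<Longrightarrow> c \<le> f x \<Longrightarrow> hit_time c f \<le> x"
  unfolding hit_time_def by (rule cInf_lower) (auto intro: bdd_belowI[of _ 0])

lemma ex_hit_iff_Rats: "(\<exists>x\<ge>0. c \<le> f x) \<longleftrightarrow> (\<exists>q\<in>\<rat>. 0 \<le> q \<and> c \<le> f q)"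
proof
  assume "\<exists>x\<ge>0. c \<le> f x"
  then obtain x where x: "0 \<le> x" "c \<le> f x" by blast
  have "x < x + 1" by simp
  with x(1) obtain q where q: "q \<in> \<rat>" "x < q" "q < x + 1" "f q = f x"
    by (rule right_locally_const_Rats)
  have "0 \<le> q" using x(1) q(2) by linarith
  moreover have "c \<le> f q" using x(2) q(4) by simp
  ultimately show "\<exists>q\<in>\<rat>. 0 \<le> q \<and> c \<le> f q" using q(1) by blast
next
  assume "\<exists>q\<in>\<rat>. 0 \<le> q \<and> c \<le> f q"
  then show "\<exists>x\<ge>0. c \<le> f x" by blast
qed

context
  assumes hit: "\<exists>x\<ge>0. c \<le> f x"
begin

lemma hit_time_hits: "0 \<le> hit_time c f" "c \<le> f (hit_time c f)"
proof -
  let ?S = "{x. 0 \<le> x \<and> c \<le> f x}"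
  have ne: "?S \<noteq> {}" and bdd: "bdd_below ?S"
    using hit by (auto intro: bdd_belowI[of _ 0])
  show t0: "0 \<le> hit_time c f"
    unfolding hit_time_def using ne by (intro cInf_greatest) auto
  show "c \<le> f (hit_time c f)"
  proof (rule ccontr)
    assume miss: "\<not> c \<le> f (hit_time c f)"
    obtain \<epsilon> where "\<epsilon> > 0"
      and \<epsilon>: "\<And>u. hit_time c f \<le> u \<Longrightarrow> u < hit_time c f + \<epsilon> \<Longrightarrow> f u = f (hit_time c f)"
      using right_locally_constE[OF t0] by blast
    have "hit_time c f < hit_time c f + \<epsilon>" using \<open>\<epsilon> > 0\<close> by simp
    then have "\<exists>x\<in>?S. x < hit_time c f + \<epsilon>"
      unfolding hit_time_def by (rule cInf_lessD[OF ne])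
    then obtain x where x: "0 \<le> x" "c \<le> f x" "x < hit_time c f + \<epsilon>" by blast
    with \<epsilon> hit_time_le[OF x(1,2)] have "f x = f (hit_time c f)" by blast
    with x(2) miss show False by simp
  qed
qed

lemma hit_time_less_iff_Rats:
  "hit_time c f < a \<longleftrightarrow> (\<exists>q\<in>\<rat>. 0 \<le> q \<and> q < a \<and> c \<le> f q)"
proof
  assume "hit_time c f < a"
  then obtain q where "q \<in> \<rat>" "hit_time c f < q" "q < a" "f q = f (hit_time c f)"
    using right_locally_const_Rats[OF hit_time_hits(1)] by blast
  with hit_time_hits show "\<exists>q\<in>\<rat>. 0 \<le> q \<and> q < a \<and> c \<le> f q"
    by (intro bexI[of _ q]) auto
next
  assume "\<exists>q\<in>\<rat>. 0 \<le> q \<and> q < a \<and> c \<le> f q"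
  then obtain q where "0 \<le> q" "q < a" "c \<le> f q" by blast
  with hit_time_le[of q] show "hit_time c f < a" by linarith
qed

lemma hit_state_eq_iff_Rats:
  assumes "c \<le> k"
  shows "f (hit_time c f) = k \<longleftrightarrow>
    (\<exists>q\<in>\<rat>. 0 \<le> q \<and> f q = k \<and> (\<forall>q'\<in>\<rat>. 0 \<le> q' \<longrightarrow> q' \<le> q \<longrightarrow> c \<le> f q' \<longrightarrow> f q' = k))"
proof
  let ?\<tau> = "hit_time c f"
  assume k: "f ?\<tau> = k"
  obtain \<epsilon> where "\<epsilon> > 0" and \<epsilon>: "\<And>u. ?\<tau> \<le> u \<Longrightarrow> u < ?\<tau> + \<epsilon> \<Longrightarrow> f u = f ?\<tau>"
    using right_locally_constE[OF hit_time_hits(1)] by blast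
  then have "?\<tau> < ?\<tau> + \<epsilon>" by simp
  with hit_time_hits(1) obtain q where q: "q \<in> \<rat>" "?\<tau> < q" "q < ?\<tau> + \<epsilon>" "f q = f ?\<tau>"
    by (rule right_locally_const_Rats)
  have "f q' = k" if "0 \<le> q'" "q' \<le> q" "c \<le> f q'" for q'
  proof -
    have "?\<tau> \<le> q'" by (rule hit_time_le[OF that(1,3)])
    moreover have "q' < ?\<tau> + \<epsilon>" using that(2) q(3) by linarith
    ultimately show ?thesis using \<epsilon> k by simp
  qed
  moreover have "0 \<le> q" using hit_time_hits(1) q(2) by linarith
  ultimately show "\<exists>q\<in>\<rat>. 0 \<le> q \<and> f q = k \<and>
      (\<forall>q'\<in>\<rat>. 0 \<le> q' \<longrightarrow> q' \<le> q \<longrightarrow> c \<le> f q' \<longrightarrow> f q' = k)"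
    using q(1,4) k by blast
next
  let ?\<tau> = "hit_time c f"
  assume "\<exists>q\<in>\<rat>. 0 \<le> q \<and> f q = k \<and> (\<forall>q'\<in>\<rat>. 0 \<le> q' \<longrightarrow> q' \<le> q \<longrightarrow> c \<le> f q' \<longrightarrow> f q' = k)"
  then obtain q where q: "0 \<le> q" "f q = k"
    and before: "\<And>q'. q' \<in> \<rat> \<Longrightarrow> 0 \<le> q' \<Longrightarrow> q' \<le> q \<Longrightarrow> c \<le> f q' \<Longrightarrow> f q' = k" by blast
  have "c \<le> f q" using q(2) assms by simp
  with q(1) have "?\<tau> \<le> q" by (rule hit_time_le)
  show "f ?\<tau> = k"
  proof (cases "?\<tau> = q")
    case True
    then show ?thesis using q(2) by simp
  next
    case False
    with \<open>?\<tau> \<le> q\<close> have "?\<tau> < q" by simp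
    with hit_time_hits(1) obtain q' where q': "q' \<in> \<rat>" "?\<tau> < q'" "q' < q" "f q' = f ?\<tau>"
      by (rule right_locally_const_Rats)
    have "0 \<le> q'" "q' \<le> q" using hit_time_hits(1) q'(2,3) by linarith+
    moreover have "c \<le> f q'" using q'(4) hit_time_hits(2) by simp
    ultimately have "f q' = k" using before q'(1) by blast
    with q'(4) show ?thesis by simp
  qed
qed

end

lemma absorbed_on_Rats_imp_const:
  assumes "absorbed_on_Rats c f" "0 \<le> x" "c \<le> f x" "x \<le> y"
  shows "f y = f x"
proof -
  have "0 \<le> y" "y < y + 1" using assms(2,4) by auto
  then obtain r where r: "r \<in> \<rat>" "y < r" "f r = f y"
    by (rule right_locally_const_Rats)
  have "x < r" using assms(4) r(2) by linarith
  with assms(2) obtain q where q: "q \<in> \<rat>" "x < q" "q < r" "f q = f x"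
    by (rule right_locally_const_Rats)
  have "0 \<le> q" "q \<le> r" "c \<le> f q" using q assms(2,3) by (linarith, linarith, simp)
  then have "f r = f q"
    using assms(1) q(1) r(1) unfolding absorbed_on_Rats_def by blast
  with q(4) r(3) show ?thesis by simp
qed

lemma hit_before_iff_state:
  assumes "absorbed_on_Rats c f" "0 \<le> t" "c \<le> k"
  shows "((\<exists>x\<ge>0. c \<le> f x) \<and> hit_time c f \<le> t \<and> f (hit_time c f) = k) \<longleftrightarrow> f t = k"
proof
  assume "(\<exists>x\<ge>0. c \<le> f x) \<and> hit_time c f \<le> t \<and> f (hit_time c f) = k"
  then have hit: "\<exists>x\<ge>0. c \<le> f x" and "hit_time c f \<le> t" "f (hit_time c f) = k" by blast+
  with absorbed_on_Rats_imp_const[OF assms(1) hit_time_hits[OF hit]] show "f t = k" by simp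
next
  assume ft: "f t = k"
  then have "c \<le> f t" using assms(3) by simp
  then have hit: "\<exists>x\<ge>0. c \<le> f x" using assms(2) by blast
  have "hit_time c f \<le> t" by (rule hit_time_le) fact+
  moreover have "f t = f (hit_time c f)"
    using absorbed_on_Rats_imp_const[OF assms(1) hit_time_hits[OF hit] calculation] .
  ultimately show "(\<exists>x\<ge>0. c \<le> f x) \<and> hit_time c f \<le> t \<and> f (hit_time c f) = k"
    using hit ft by simp
qed

end

section \<open>Markov jump processes absorbed above level 2p\<close>

lemma measure_eqI_atMost:
  fixes M N :: "real measure"
  assumes sets: "sets M = sets borel" "sets N = sets borel"
    and fin: "\<And>a. emeasure M {..a} < \<infinity>"
    and eq: "\<And>a. emeasure M {..a} = emeasure N {..a}"
  shows "M = N"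
proof (rule measure_eqI_generator_eq[where E = "range atMost" and \<Omega> = UNIV and A = "\<lambda>i. {..real i}"])
  show "Int_stable (range (atMost :: real \<Rightarrow> real set))"
    by (auto simp: Int_stable_def)
  show "sets M = sigma_sets UNIV (range atMost)" "sets N = sigma_sets UNIV (range atMost)"
    unfolding sets borel_eq_atMost by (simp_all add: sets_measure_of)
  show "(\<Union>i. {..real i}) = UNIV" by (auto simp: real_arch_simple)
  show "emeasure M {..real i} \<noteq> \<infinity>" for i using fin[of "real i"] by simp
qed (use eq in auto)

locale absorbing_mjp = prob_space M
  for M :: "'w measure" and n :: nat and Q :: rmat and \<pi> :: "nat \<Rightarrow> real"
    and \<phi> :: "'w \<Rightarrow> real \<Rightarrow> nat" and p :: nat +
  assumes mjp: "is_MJP M n Q \<pi> \<phi>"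
    and absorbing: "\<And>a j. 2 * p \<le> a \<Longrightarrow> Q a j = 0"
begin

lemma measurable_state: "(\<lambda>\<omega>. \<phi> \<omega> t) \<in> measurable M (count_space UNIV)"
  using mjp unfolding is_MJP_def by blast

lemma state_less: "\<omega> \<in> space M \<Longrightarrow> 0 \<le> t \<Longrightarrow> \<phi> \<omega> t < n"
  using mjp unfolding is_MJP_def by blast

lemma right_locally_const_path: "\<omega> \<in> space M \<Longrightarrow> right_locally_const (\<phi> \<omega>)"
  using mjp unfolding is_MJP_def right_locally_const_def by blast

lemma measure_fdd:
  "ts 0 = 0 \<Longrightarrow> (\<forall>k<m. ts k \<le> ts (Suc k)) \<Longrightarrow>
   measure M {\<omega>\<in>space M. \<forall>k\<le>m. \<phi> \<omega> (ts k) = st k} =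
     \<pi> (st 0) * (\<Prod>k<m. mexp n (mscale (ts (Suc k) - ts k) Q) (st k) (st (Suc k)))"
  using mjp unfolding is_MJP_def by blast

lemma sets_state: "{\<omega>\<in>space M. P (\<phi> \<omega> t)} \<in> sets M"
  using measurable_sets[OF measurable_state, of "{x. P x}" t] by (simp add: vimage_def Int_def conj_commute)

lemma measure_state_pair:
  assumes "0 \<le> t"
  shows "measure M {\<omega>\<in>space M. \<phi> \<omega> 0 = i \<and> \<phi> \<omega> t = k} = \<pi> i * mexp n (mscale t Q) i k"
proof -
  define ts :: "nat \<Rightarrow> real" where "ts j = (if j = 0 then 0 else t)" for j
  define st :: "nat \<Rightarrow> nat" where "st j = (if j = 0 then i else k)" for j
  have "{\<omega>\<in>space M. \<forall>j\<le>1. \<phi> \<omega> (ts j) = st j} = {\<omega>\<in>space M. \<phi> \<omega> 0 = i \<and> \<phi> \<omega> t = k}"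
    by (auto simp: ts_def st_def le_Suc_eq)
  moreover have "measure M {\<omega>\<in>space M. \<forall>j\<le>1. \<phi> \<omega> (ts j) = st j} = \<pi> i * mexp n (mscale t Q) i k"
    using measure_fdd[of ts 1 st] assms by (simp add: ts_def st_def)
  ultimately show ?thesis by simp
qed

lemma measure_state_triple:
  assumes "0 \<le> q" "q \<le> r"
  shows "measure M {\<omega>\<in>space M. \<phi> \<omega> 0 = i \<and> \<phi> \<omega> q = a \<and> \<phi> \<omega> r = b}
     = \<pi> i * mexp n (mscale q Q) i a * mexp n (mscale (r - q) Q) a b"
proof -
  define ts :: "nat \<Rightarrow> real" where "ts j = (if j = 0 then 0 else if j = 1 then q else r)" for j
  define st :: "nat \<Rightarrow> nat" where "st j = (if j = 0 then i else if j = 1 then a else b)" for j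
  have "{\<omega>\<in>space M. \<forall>j\<le>2. \<phi> \<omega> (ts j) = st j} = {\<omega>\<in>space M. \<phi> \<omega> 0 = i \<and> \<phi> \<omega> q = a \<and> \<phi> \<omega> r = b}"
    by (auto simp: ts_def st_def numeral_2_eq_2 le_Suc_eq)
  moreover have "measure M {\<omega>\<in>space M. \<forall>j\<le>2. \<phi> \<omega> (ts j) = st j}
      = \<pi> i * mexp n (mscale q Q) i a * mexp n (mscale (r - q) Q) a b"
    using measure_fdd[of ts 2 st] assms by (simp add: ts_def st_def numeral_2_eq_2 less_Suc_eq)
  ultimately show ?thesis by simp
qed

definition state_prob :: "nat \<Rightarrow> real \<Rightarrow> real" where
  "state_prob k t = (\<Sum>i<n. \<pi> i * mexp n (mscale t Q) i k)"

lemma measure_state: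
  assumes "0 \<le> t"
  shows "measure M {\<omega>\<in>space M. \<phi> \<omega> t = k} = state_prob k t"
proof -
  have "{\<omega>\<in>space M. \<phi> \<omega> t = k} = (\<Union>i\<in>{..<n}. {\<omega>\<in>space M. \<phi> \<omega> 0 = i \<and> \<phi> \<omega> t = k})"
    using state_less by auto
  then have "measure M {\<omega>\<in>space M. \<phi> \<omega> t = k} =
      (\<Sum>i<n. measure M {\<omega>\<in>space M. \<phi> \<omega> 0 = i \<and> \<phi> \<omega> t = k})"
    by (simp, intro finite_measure_finite_Union)
       (auto simp: disjoint_family_on_def intro!: sets.sets_Collect_conj sets_state)
  then show ?thesis using measure_state_pair[OF assms] by (simp add: state_prob_def)
qed

lemma AE_absorbed:
  assumes "0 \<le> q" "q \<le> r"
  shows "AE \<omega> in M. 2 * p \<le> \<phi> \<omega> q \<longrightarrow> \<phi> \<omega> r = \<phi> \<omega> q"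
proof -
  have null: "AE \<omega> in M. \<not> (\<phi> \<omega> 0 = i \<and> \<phi> \<omega> q = a \<and> \<phi> \<omega> r = b)"
    if "2 * p \<le> a" "a \<noteq> b" for i a b
  proof (rule AE_I')
    let ?N = "{\<omega>\<in>space M. \<phi> \<omega> 0 = i \<and> \<phi> \<omega> q = a \<and> \<phi> \<omega> r = b}"
    have "mexp n (mscale (r - q) Q) a b = mid a b"
      by (rule mexp_zero_row) (simp add: absorbing that)
    then have "measure M ?N = 0"
      using measure_state_triple[OF assms] that by (simp add: mid_def)
    moreover have "?N \<in> sets M" by (intro sets.sets_Collect_conj sets_state)
    ultimately show "?N \<in> null_sets M" by (simp add: emeasure_eq_measure null_sets_def)
  qed auto
  have "AE \<omega> in M. \<forall>i\<in>{..<n}. \<forall>a\<in>{..<n}. \<forall>b\<in>{..<n}.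
      2 * p \<le> a \<longrightarrow> a \<noteq> b \<longrightarrow> \<not> (\<phi> \<omega> 0 = i \<and> \<phi> \<omega> q = a \<and> \<phi> \<omega> r = b)"
    by (intro AE_finite_allI finite_lessThan AE_impI) (rule null)
  then show ?thesis
  proof (rule AE_mp[OF _ AE_I2], intro impI)
    fix \<omega> assume \<omega>: "\<omega> \<in> space M" and absorbed: "2 * p \<le> \<phi> \<omega> q"
      and H: "\<forall>i\<in>{..<n}. \<forall>a\<in>{..<n}. \<forall>b\<in>{..<n}.
        2 * p \<le> a \<longrightarrow> a \<noteq> b \<longrightarrow> \<not> (\<phi> \<omega> 0 = i \<and> \<phi> \<omega> q = a \<and> \<phi> \<omega> r = b)"
    have "\<phi> \<omega> 0 \<in> {..<n}" "\<phi> \<omega> q \<in> {..<n}" "\<phi> \<omega> r \<in> {..<n}"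
      using state_less[OF \<omega>] assms by auto
    show "\<phi> \<omega> r = \<phi> \<omega> q"
    proof (rule ccontr)
      assume "\<phi> \<omega> r \<noteq> \<phi> \<omega> q"
      with H[rule_format, OF \<open>\<phi> \<omega> 0 \<in> {..<n}\<close> \<open>\<phi> \<omega> q \<in> {..<n}\<close> \<open>\<phi> \<omega> r \<in> {..<n}\<close> absorbed]
      show False by simp
    qed
  qed
qed

lemma AE_absorbed_on_Rats: "AE \<omega> in M. absorbed_on_Rats (2 * p) (\<phi> \<omega>)"
  unfolding absorbed_on_Rats_def
  by (intro AE_ball_countable' countable_rat AE_impI) (rule AE_absorbed)

lemma sets_exits: "{\<omega>\<in>space M. exits p \<phi> \<omega>} \<in> sets M"
proof -
  have "{\<omega>\<in>space M. exits p \<phi> \<omega>} = {\<omega>\<in>space M. \<exists>q\<in>\<rat>. 0 \<le> q \<and> 2 * p \<le> \<phi> \<omega> q}"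
    using ex_hit_iff_Rats[OF right_locally_const_path] unfolding exits_def by blast
  also have "\<dots> \<in> sets M"
    by (intro sets.sets_Collect_countable_Ex' countable_rat sets_state[where P = "\<lambda>v. _ \<and> 2 * p \<le> v"])
  finally show ?thesis .
qed

lemma tau_eq_hit_time: "tau p \<phi> \<omega> = hit_time (2 * p) (\<phi> \<omega>)"
  by (simp add: tau_def hit_time_def)

lemma exits_tau:
  "\<omega> \<in> space M \<Longrightarrow> exits p \<phi> \<omega> \<Longrightarrow> 0 \<le> tau p \<phi> \<omega> \<and> 2 * p \<le> \<phi> \<omega> (tau p \<phi> \<omega>)"
  unfolding exits_def tau_eq_hit_time using hit_time_hits[OF right_locally_const_path] by blast

lemma borel_measurable_tau: "tau p \<phi> \<in> borel_measurable M"
proof (unfold borel_measurable_iff_less, intro allI)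
  fix a :: real
  have "{\<omega>\<in>space M. tau p \<phi> \<omega> < a} =
    {\<omega>\<in>space M. (exits p \<phi> \<omega> \<and> (\<exists>q\<in>\<rat>. 0 \<le> q \<and> q < a \<and> 2 * p \<le> \<phi> \<omega> q)) \<or>
                 (\<not> exits p \<phi> \<omega> \<and> Inf ({} :: real set) < a)}"
  proof (intro Collect_cong conj_cong refl)
    fix \<omega> assume "\<omega> \<in> space M"
    show "tau p \<phi> \<omega> < a \<longleftrightarrow> (exits p \<phi> \<omega> \<and> (\<exists>q\<in>\<rat>. 0 \<le> q \<and> q < a \<and> 2 * p \<le> \<phi> \<omega> q)) \<or>
                 (\<not> exits p \<phi> \<omega> \<and> Inf ({} :: real set) < a)"
    proof (cases "exits p \<phi> \<omega>")
      case True
      then show ?thesis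
        using hit_time_less_iff_Rats[OF right_locally_const_path[OF \<open>\<omega> \<in> space M\<close>]]
        unfolding exits_def tau_eq_hit_time by simp
    next
      case False
      then have "{x. 0 \<le> x \<and> 2 * p \<le> \<phi> \<omega> x} = {}" unfolding exits_def by auto
      with False show ?thesis unfolding tau_def by (simp only:) simp
    qed
  qed
  also have "\<dots> \<in> sets M"
    by (intro sets.sets_Collect_disj sets.sets_Collect_conj sets.sets_Collect_neg sets_exits
        sets.sets_Collect_countable_Ex' countable_rat sets.sets_Collect_const
        sets_state[where P = "\<lambda>v. _ \<and> _ \<and> 2 * p \<le> v"])
  finally show "{\<omega>\<in>space M. tau p \<phi> \<omega> < a} \<in> sets M" .
qed

lemma sets_exit_state:
  assumes "2 * p \<le> k"
  shows "{\<omega>\<in>space M. exits p \<phi> \<omega> \<and> \<phi> \<omega> (tau p \<phi> \<omega>) = k} \<in> sets M"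
proof -
  let ?before = "\<lambda>\<omega> q. \<forall>q'\<in>\<rat>. 0 \<le> q' \<longrightarrow> q' \<le> q \<longrightarrow> 2 * p \<le> \<phi> \<omega> q' \<longrightarrow> \<phi> \<omega> q' = k"
  have "{\<omega>\<in>space M. exits p \<phi> \<omega> \<and> \<phi> \<omega> (tau p \<phi> \<omega>) = k} =
     {\<omega>\<in>space M. exits p \<phi> \<omega> \<and> (\<exists>q\<in>\<rat>. 0 \<le> q \<and> \<phi> \<omega> q = k \<and> ?before \<omega> q)}"
    using hit_state_eq_iff_Rats[OF right_locally_const_path _ assms]
    unfolding exits_def tau_eq_hit_time by blast
  also have "\<dots> \<in> sets M"
    by (intro sets.sets_Collect_conj sets_exits sets.sets_Collect_countable_Ex' countable_rat
        sets.sets_Collect_countable_All' sets.sets_Collect_const sets_state[where P = "\<lambda>v. v = k"]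
        sets_state[where P = "\<lambda>v. _ \<longrightarrow> _ \<longrightarrow> 2 * p \<le> v \<longrightarrow> v = k"])
  finally show ?thesis .
qed

definition exit_event :: "nat \<Rightarrow> real set \<Rightarrow> 'w set" where
  "exit_event k B = {\<omega>\<in>space M. exits p \<phi> \<omega> \<and> \<phi> \<omega> (tau p \<phi> \<omega>) = k \<and> tau p \<phi> \<omega> \<in> B}"

lemma exit_event_eq:
  "exit_event k B = {\<omega>\<in>space M. exits p \<phi> \<omega> \<and> \<phi> \<omega> (tau p \<phi> \<omega>) = k} \<inter> (tau p \<phi> -` B \<inter> space M)"
  unfolding exit_event_def by blast

lemma sets_exit_event: "2 * p \<le> k \<Longrightarrow> B \<in> sets borel \<Longrightarrow> exit_event k B \<in> sets M"
  unfolding exit_event_eq by (intro sets.Int sets_exit_state measurable_sets[OF borel_measurable_tau])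

lemma exit_event_atMost_neg: "t < 0 \<Longrightarrow> exit_event k {..t} = {}"
  unfolding exit_event_def using exits_tau by fastforce

lemma measure_exit_event_atMost:
  assumes "2 * p \<le> k" "0 \<le> t"
  shows "measure M (exit_event k {..t}) = measure M {\<omega>\<in>space M. \<phi> \<omega> t = k}"
proof (rule measure_eq_AE)
  show "AE \<omega> in M. \<omega> \<in> exit_event k {..t} \<longleftrightarrow> \<omega> \<in> {\<omega>\<in>space M. \<phi> \<omega> t = k}"
    using AE_absorbed_on_Rats
  proof (rule AE_mp[OF _ AE_I2], intro impI)
    fix \<omega> assume "\<omega> \<in> space M" "absorbed_on_Rats (2 * p) (\<phi> \<omega>)"
    with hit_before_iff_state[OF right_locally_const_path _ assms(2,1)]
    show "\<omega> \<in> exit_event k {..t} \<longleftrightarrow> \<omega> \<in> {\<omega>\<in>space M. \<phi> \<omega> t = k}"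
      unfolding exit_event_def exits_def tau_eq_hit_time by auto
  qed
qed (simp_all add: sets_exit_event assms sets_state[where P = "\<lambda>v. v = k"])

definition state_prob_deriv :: "nat \<Rightarrow> real \<Rightarrow> real" where
  "state_prob_deriv k t = (\<Sum>i<n. \<pi> i * (\<Sum>j<n. mexp n (mscale t Q) i j * Q j k))"

lemma has_real_derivative_state_prob:
  "k < n \<Longrightarrow> (state_prob k has_real_derivative state_prob_deriv k t) (at t)"
  unfolding state_prob_def[abs_def] state_prob_deriv_def
  by (intro DERIV_sum DERIV_cmult has_real_derivative_mexp)

lemma borel_measurable_state_prob_deriv: "k < n \<Longrightarrow> state_prob_deriv k \<in> borel_measurable borel"
proof -
  assume "k < n"
  have cont: "continuous_on UNIV (\<lambda>t. mexp n (mscale t Q) i j)" if "j < n" for i j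
    by (rule DERIV_continuous_on, rule has_field_derivative_at_within, rule has_real_derivative_mexp[OF that])
  have "continuous_on UNIV (state_prob_deriv k)"
    unfolding state_prob_deriv_def[abs_def]
    by (intro continuous_on_sum continuous_on_mult continuous_on_const cont) simp
  then show ?thesis by (rule borel_measurable_continuous_onI)
qed

lemma state_prob_0: "k < n \<Longrightarrow> state_prob k 0 = \<pi> k"
proof -
  assume "k < n"
  have "state_prob k 0 = (\<Sum>i<n. if i = k then \<pi> i else 0)"
    unfolding state_prob_def mexp_mscale_0 by (intro sum.cong refl) (simp add: mid_def)
  with \<open>k < n\<close> show ?thesis by simp
qed

lemma state_prob_mono:
  assumes "2 * p \<le> k" "0 \<le> s" "s \<le> t"
  shows "state_prob k s \<le> state_prob k t"
proof -
  have "measure M {\<omega>\<in>space M. \<phi> \<omega> s = k} \<le> measure M {\<omega>\<in>space M. \<phi> \<omega> t = k}"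
  proof (rule finite_measure_mono_AE)
    show "AE \<omega> in M. \<omega> \<in> {\<omega>\<in>space M. \<phi> \<omega> s = k} \<longrightarrow> \<omega> \<in> {\<omega>\<in>space M. \<phi> \<omega> t = k}"
      using AE_absorbed_on_Rats
    proof (rule AE_mp[OF _ AE_I2], intro impI)
      fix \<omega> assume \<omega>: "\<omega> \<in> space M" and absorbed: "absorbed_on_Rats (2 * p) (\<phi> \<omega>)"
        and "\<omega> \<in> {\<omega>\<in>space M. \<phi> \<omega> s = k}"
      then have "\<phi> \<omega> s = k" by simp
      with assms(1) have "2 * p \<le> \<phi> \<omega> s" by simp
      from absorbed_on_Rats_imp_const[OF right_locally_const_path[OF \<omega>] absorbed assms(2) this assms(3)]
      show "\<omega> \<in> {\<omega>\<in>space M. \<phi> \<omega> t = k}" using \<omega> \<open>\<phi> \<omega> s = k\<close> by simp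
    qed
  qed (rule sets_state)
  with assms show ?thesis by (simp add: measure_state)
qed

lemma state_prob_deriv_nonneg:
  assumes "2 * p \<le> k" "k < n" "0 \<le> x"
  shows "0 \<le> state_prob_deriv k x"
proof (rule ccontr)
  assume "\<not> 0 \<le> state_prob_deriv k x"
  then have "state_prob_deriv k x < 0" by simp
  from DERIV_neg_dec_right[OF has_real_derivative_state_prob[OF assms(2)] this]
  obtain d where "d > 0" and dec: "\<forall>h>0. h < d \<longrightarrow> state_prob k x > state_prob k (x + h)"
    by blast
  then have "state_prob k (x + d / 2) < state_prob k x" by simp
  moreover have "state_prob k x \<le> state_prob k (x + d / 2)"
    using \<open>d > 0\<close> assms by (intro state_prob_mono) auto
  ultimately show False by simp
qed

lemma has_integral_state_prob_deriv:
  assumes "k < n" "0 \<le> t"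
  shows "(state_prob_deriv k has_integral (state_prob k t - state_prob k 0)) {0..t}"
  using assms has_real_derivative_state_prob[OF assms(1)]
  by (intro fundamental_theorem_of_calculus)
     (auto simp: has_real_derivative_iff_has_vector_derivative intro: has_vector_derivative_at_within)

definition exit_distr :: "nat \<Rightarrow> real measure" where
  "exit_distr k = distr (density M (indicator {\<omega>\<in>space M. exits p \<phi> \<omega> \<and> \<phi> \<omega> (tau p \<phi> \<omega>) = k}))
     borel (tau p \<phi>)"

lemma emeasure_exit_distr:
  assumes "2 * p \<le> k" "B \<in> sets borel"
  shows "emeasure (exit_distr k) B = emeasure M (exit_event k B)"
proof -
  let ?A = "{\<omega>\<in>space M. exits p \<phi> \<omega> \<and> \<phi> \<omega> (tau p \<phi> \<omega>) = k}"
  have A: "?A \<in> sets M" by (rule sets_exit_state[OF assms(1)])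
  have T: "tau p \<phi> -` B \<inter> space M \<in> sets M"
    by (rule measurable_sets[OF borel_measurable_tau assms(2)])
  have "emeasure (exit_distr k) B = emeasure (density M (indicator ?A)) (tau p \<phi> -` B \<inter> space M)"
    unfolding exit_distr_def by (subst emeasure_distr) (simp_all add: borel_measurable_tau assms(2))
  also have "\<dots> = emeasure M (?A \<inter> (tau p \<phi> -` B \<inter> space M))"
    by (rule emeasure_restricted[OF A T])
  also have "?A \<inter> (tau p \<phi> -` B \<inter> space M) = exit_event k B"
    unfolding exit_event_eq ..
  finally show ?thesis .
qed

lemma exit_distr_eq_density:
  assumes k: "2 * p \<le> k" "k < n" and "\<pi> k = 0"
  shows "exit_distr k = density lborel (\<lambda>x. ennreal (indicator {0..} x * state_prob_deriv k x))"
proof (rule measure_eqI_atMost)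
  show "sets (exit_distr k) = sets borel"
    "sets (density lborel (\<lambda>x. ennreal (indicator {0..} x * state_prob_deriv k x))) = sets borel"
    by (simp_all add: exit_distr_def)
  show "emeasure (exit_distr k) {..a} < \<infinity>" for a
    using emeasure_exit_distr[OF k(1)] by (simp add: emeasure_eq_measure)
  show "emeasure (exit_distr k) {..a} =
      emeasure (density lborel (\<lambda>x. ennreal (indicator {0..} x * state_prob_deriv k x))) {..a}" for a
  proof -
    have "emeasure (density lborel (\<lambda>x. ennreal (indicator {0..} x * state_prob_deriv k x))) {..a}
        = (\<integral>\<^sup>+ x. ennreal (indicator {0..a} x * state_prob_deriv k x) \<partial>lborel)"
      using borel_measurable_state_prob_deriv[OF k(2)]
      by (subst emeasure_density) (auto intro!: nn_integral_cong split: split_indicator)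
    also have "\<dots> = (if a < 0 then 0 else ennreal (state_prob k a))"
    proof (cases "a < 0")
      case False
      then have "(\<integral>\<^sup>+ x. ennreal (indicator {0..a} x * state_prob_deriv k x) \<partial>lborel)
          = ennreal (state_prob k a - state_prob k 0)"
        using state_prob_deriv_nonneg[OF k] has_integral_state_prob_deriv[OF k(2)]
        by (intro nn_integral_has_integral_lebesgue) auto
      with False show ?thesis using state_prob_0[OF k(2)] \<open>\<pi> k = 0\<close> by simp
    qed simp
    also have "\<dots> = emeasure (exit_distr k) {..a}"
      using emeasure_exit_distr[OF k(1)] exit_event_atMost_neg measure_exit_event_atMost[OF k(1)]
        measure_state by (simp add: emeasure_eq_measure)
    finally show ?thesis ..
  qed
qed

lemma exit_event_density:
  assumes k: "2 * p \<le> k" "k < n" and "\<pi> k = 0" and B: "B \<in> sets borel" "B \<subseteq> {0..}"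
  shows "set_integrable lborel B (state_prob_deriv k) \<and>
    (LINT x:B|lborel. state_prob_deriv k x) = measure M (exit_event k B)"
proof -
  let ?g = "\<lambda>x. indicator B x * state_prob_deriv k x"
  have g: "?g \<in> borel_measurable lborel"
    using borel_measurable_state_prob_deriv[OF k(2)] B(1) by measurable
  have nonneg: "0 \<le> ?g x" for x
    using B(2) state_prob_deriv_nonneg[OF k, of x] by (auto split: split_indicator)
  have "(\<integral>\<^sup>+ x. ennreal (?g x) \<partial>lborel) = emeasure (exit_distr k) B"
    using B borel_measurable_state_prob_deriv[OF k(2)]
    by (simp add: exit_distr_eq_density[OF assms(1-3)] emeasure_density)
       (auto intro!: nn_integral_cong split: split_indicator)
  also have "\<dots> = ennreal (measure M (exit_event k B))"
    by (simp add: emeasure_exit_distr[OF k(1) B(1)] emeasure_eq_measure)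
  finally have nn: "(\<integral>\<^sup>+ x. ennreal (?g x) \<partial>lborel) = ennreal (measure M (exit_event k B))" .
  then have "integrable lborel ?g"
    using nonneg by (intro integrableI_nonneg[OF g]) auto
  moreover have "(\<integral>x. ?g x \<partial>lborel) = measure M (exit_event k B)"
    using integral_eq_nn_integral[OF g] nonneg nn by simp
  ultimately show ?thesis unfolding set_integrable_def set_lebesgue_integral_def by simp
qed

lemma tau_measure_eq:
  assumes "B \<in> sets borel"
  shows "tau_measure M p \<phi> B = measure M (exit_event (2 * p) B) - measure M (exit_event (2 * p + 1) B)"
proof -
  have sets: "exit_event (2 * p) B \<in> sets M" "exit_event (2 * p + 1) B \<in> sets M"
    using sets_exit_event assms by auto
  have "tau_measure M p \<phi> B =
      (\<integral>\<omega>. indicator (exit_event (2 * p) B) \<omega> - indicator (exit_event (2 * p + 1) B) \<omega> \<partial>M)"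
    unfolding tau_measure_def
    by (intro Bochner_Integration.integral_cong) (auto simp: exit_event_def beta_def split: split_indicator)
  also have "\<dots> = measure M (exit_event (2 * p) B) - measure M (exit_event (2 * p + 1) B)"
    using sets by (subst Bochner_Integration.integral_diff) (auto simp: emeasure_eq_measure)
  finally show ?thesis .
qed

lemma state_prob_deriv_diff:
  "state_prob_deriv k t - state_prob_deriv k' t = bilin n \<pi> (mexp n (mscale t Q)) (\<lambda>j. Q j k - Q j k')"
  by (simp add: state_prob_deriv_def bilin_def sum_subtractf[symmetric] sum_distrib_left right_diff_distrib
      mult.assoc)

end

section \<open>The tilted density\<close>

lemma genQ_exit_columns: "genQ p T s lam j (2 * p) - genQ p T s lam j (2 * p + 1) = s_pm p s j"
  by (auto simp: genQ_def subG_def s_pm_def splus_def sminus_def)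

lemma bilin_genQ_eq_blockG:
  "bilin (2 * p + 3) (init_dist p \<alpha>) (mexp (2 * p + 3) (mscale x (genQ p T s lam))) (s_pm p s) =
   bilin (2 * p) (init_dist p \<alpha>) (mexp (2 * p) (mscale x (blockG p T s lam))) (s_pm p s)"
  by (rule bilin_restrict) (auto simp: init_dist_def s_pm_def genQ_def blockG_def intro!: mexp_restrict)

theorem theorem3p2:
  fixes p :: nat and \<alpha> :: "nat \<Rightarrow> real" and T :: rmat and s :: "nat \<Rightarrow> real"
    and lam :: real and M :: "'w measure" and \<phi> :: "'w \<Rightarrow> real \<Rightarrow> nat"
  assumes p: "p \<ge> 1"
    and dens_nonneg: "\<forall>x>0. ME_density p \<alpha> T s x \<ge> 0"
    and dens_int: "(ME_density p \<alpha> T s has_integral 1) {0<..}"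
    and dom_eig: "\<exists>\<eta>::real. \<eta> < 0 \<and> is_eigenvalue p T (complex_of_real \<eta>) \<and>
                    (\<forall>z. is_eigenvalue p T z \<longrightarrow> Re z \<le> \<eta>)"
    and lam: "lam \<ge> lambda0 p T s"
    and transient: "\<forall>i<2*p. transient_state (2*p+3) (genQ p T s lam) i"
    and M: "prob_space M"
    and mjp: "is_MJP M (2*p+3) (genQ p T s lam) (init_dist p \<alpha>) \<phi>"
  shows "let c = bilin p \<alpha> (minv p (\<lambda>i j. (if i = j then lam else 0) - T i j)) s;
             w = wplus p \<alpha> + wminus p \<alpha>;
             flam = (\<lambda>x. (1 / c) * bilin p \<alpha> (mexp p (mscale x (\<lambda>i j. T i j - (if i = j then lam else 0)))) s)
         in \<exists>g :: real \<Rightarrow> real.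
              (\<forall>B\<in>sets borel. B \<subseteq> {0..} \<longrightarrow>
                 set_integrable lborel B g \<and> tau_measure M p \<phi> B = (LINT x:B|lborel. g x)) \<and>
              (\<forall>x\<ge>0. flam x = w / c * g x) \<and>
              (\<forall>x\<ge>0. flam x = w / c *
                 bilin (2*p) (init_dist p \<alpha>) (mexp (2*p) (mscale x (blockG p T s lam))) (s_pm p s))"
proof -
  \<comment> \<open>Only the generator and the initial law enter.\<close>
  interpret absorbing_mjp M "2 * p + 3" "genQ p T s lam" "init_dist p \<alpha>" \<phi> p
    by (intro absorbing_mjp.intro absorbing_mjp_axioms.intro M mjp) (simp add: genQ_def)
  define g where "g x = bilin (2 * p) (init_dist p \<alpha>) (mexp (2 * p) (mscale x (blockG p T s lam))) (s_pm p s)" for x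
  have columns: "(\<lambda>j. genQ p T s lam j (2 * p) - genQ p T s lam j (2 * p + 1)) = s_pm p s"
    using genQ_exit_columns by blast
  have g_eq: "g = (\<lambda>x. state_prob_deriv (2 * p) x - state_prob_deriv (2 * p + 1) x)"
    unfolding state_prob_deriv_diff columns bilin_genQ_eq_blockG g_def ..
  have density: "set_integrable lborel B g \<and> tau_measure M p \<phi> B = (LINT x:B|lborel. g x)"
    if "B \<in> sets borel" "B \<subseteq> {0..}" for B
    using exit_event_density[of "2 * p" B] exit_event_density[of "2 * p + 1" B] that
      set_integral_diff[of lborel B "state_prob_deriv (2 * p)" "state_prob_deriv (2 * p + 1)"]
    unfolding g_eq tau_measure_eq[OF that(1)] by (simp add: init_dist_def)
  have tilted: "(1 / c) * bilin p \<alpha> (mexp p (mscale x (\<lambda>i j. T i j - (if i = j then lam else 0)))) s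
      = (wplus p \<alpha> + wminus p \<alpha>) / c * g x" for x c
    unfolding g_def bilin_init_dist_blockG[symmetric] by simp
  show ?thesis
    unfolding Let_def g_def[symmetric] using density tilted by (intro exI[of _ g]) auto
qed

end
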